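(* Let $D:\mathbb{R}^{n+1}\to\mathbb{R}^n$ be the difference map $D(b)=(b_2-b_1,b_3-b_2,\dots,b_{n+1}-b_n)^t$ and $D^\star:\mathbb{R}^n\to\mathbb{R}^{n+1}$ its transpose, $D^\star(a)=(-a_1,a_1-a_2,\dots,a_{n-1}-a_n,a_n)^t$. On $\mathbb{R}^n$ with the standard inner product define $\|a\|_X=\|D^\star a\|_1$ and $\|a\|_Y=\min\{\|b\|_\infty: b\in\mathbb{R}^{n+1},\ Db=a\}$. Then $\|\cdot\|_X$ and $\|\cdot\|_Y$ are norms dual to each other, and they are tight: every vector $c\in\mathbb{R}^n$ is tight.
   Context: For a norm $\|\cdot\|_X$ with dual norm $\|\cdot\|_Y$ on a euclidean space with $\|v\|_2=\sqrt{\langle v,v\rangle}$, and norms $\|\cdot\|_P,\|\cdot\|_Q$ among $X,Y,2$, a decomposition $c=a+b$ is a $PQ$-decomposition if for every decomposition $c=a'+b'$: $\|a'\|_P>\|a\|_P$, or $\|b'\|_Q>\|b\|_Q$, or $(\|a'\|_P,\|b'\|_Q)=(\|a\|_P,\|b\|_Q)$. A vector $c$ is tight if every $X2$-decomposition of $c$ is an $XY$-decomposition. *)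

theory Defs
  imports Complex_Main
begin

text \<open>Vectors of R^n are modelled as functions nat => real vanishing at indices >= n
  (0-based: a 0, ..., a (n-1)); vectors of R^(n+1) vanish at indices > n.\<close>

definition V :: "nat \<Rightarrow> (nat \<Rightarrow> real) set" where
  "V n = {a. \<forall>i\<ge>n. a i = 0}"

definition W :: "nat \<Rightarrow> (nat \<Rightarrow> real) set" where
  "W n = {b. \<forall>i>n. b i = 0}"

definition vadd :: "(nat \<Rightarrow> real) \<Rightarrow> (nat \<Rightarrow> real) \<Rightarrow> nat \<Rightarrow> real" where
  "vadd a b = (\<lambda>i. a i + b i)"

definition vscale :: "real \<Rightarrow> (nat \<Rightarrow> real) \<Rightarrow> nat \<Rightarrow> real" where
  "vscale r a = (\<lambda>i. r * a i)"

definition ip :: "nat \<Rightarrow> (nat \<Rightarrow> real) \<Rightarrow> (nat \<Rightarrow> real) \<Rightarrow> real" where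
  "ip n a b = (\<Sum>i<n. a i * b i)"

definition norm2 :: "nat \<Rightarrow> (nat \<Rightarrow> real) \<Rightarrow> real" where
  "norm2 n a = sqrt (ip n a a)"

definition Dm :: "nat \<Rightarrow> (nat \<Rightarrow> real) \<Rightarrow> nat \<Rightarrow> real" where
  "Dm n b = (\<lambda>i. if i < n then b (Suc i) - b i else 0)"

definition Dstar :: "nat \<Rightarrow> (nat \<Rightarrow> real) \<Rightarrow> nat \<Rightarrow> real" where
  "Dstar n a = (\<lambda>j. if j \<le> n then (if j = 0 then 0 else a (j - 1)) - (if j < n then a j else 0) else 0)"

definition norm1W :: "nat \<Rightarrow> (nat \<Rightarrow> real) \<Rightarrow> real" where
  "norm1W n b = (\<Sum>j\<le>n. \<bar>b j\<bar>)"

definition supnormW :: "nat \<Rightarrow> (nat \<Rightarrow> real) \<Rightarrow> real" where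
  "supnormW n b = Max ((\<lambda>j. \<bar>b j\<bar>) ` {..n})"

definition normX :: "nat \<Rightarrow> (nat \<Rightarrow> real) \<Rightarrow> real" where
  "normX n a = norm1W n (Dstar n a)"

definition normY :: "nat \<Rightarrow> (nat \<Rightarrow> real) \<Rightarrow> real" where
  "normY n a = Inf (supnormW n ` {b \<in> W n. Dm n b = a})"

definition is_norm_on :: "(nat \<Rightarrow> real) set \<Rightarrow> ((nat \<Rightarrow> real) \<Rightarrow> real) \<Rightarrow> bool" where
  "is_norm_on S N \<longleftrightarrow>
     (\<forall>a\<in>S. N a \<ge> 0 \<and> (N a = 0 \<longleftrightarrow> a = (\<lambda>_. 0))) \<and>
     (\<forall>a\<in>S. \<forall>r. N (vscale r a) = \<bar>r\<bar> * N a) \<and>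
     (\<forall>a\<in>S. \<forall>b\<in>S. N (vadd a b) \<le> N a + N b)"

definition is_decomp :: "(nat \<Rightarrow> real) set \<Rightarrow> ((nat \<Rightarrow> real) \<Rightarrow> real) \<Rightarrow> ((nat \<Rightarrow> real) \<Rightarrow> real)
   \<Rightarrow> (nat \<Rightarrow> real) \<Rightarrow> (nat \<Rightarrow> real) \<Rightarrow> (nat \<Rightarrow> real) \<Rightarrow> bool" where
  "is_decomp S P Q c a b \<longleftrightarrow> a \<in> S \<and> b \<in> S \<and> c = vadd a b \<and>
     (\<forall>a'\<in>S. \<forall>b'\<in>S. c = vadd a' b' \<longrightarrow>
        P a' > P a \<or> Q b' > Q b \<or> (P a' = P a \<and> Q b' = Q b))"

definition tight :: "(nat \<Rightarrow> real) set \<Rightarrow> ((nat \<Rightarrow> real) \<Rightarrow> real) \<Rightarrow> ((nat \<Rightarrow> real) \<Rightarrow> real)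
   \<Rightarrow> ((nat \<Rightarrow> real) \<Rightarrow> real) \<Rightarrow> (nat \<Rightarrow> real) \<Rightarrow> bool" where
  "tight S NX NY N2 c \<longleftrightarrow> (\<forall>a b. is_decomp S NX N2 c a b \<longrightarrow> is_decomp S NX NY c a b)"

end

theory Submission
  imports Defs
begin

text \<open>
  The two norms are dual because \<open>D\<^sup>\<star>\<close> is the transpose of \<open>D\<close>; both the infimum defining
  \<open>\<parallel>a\<parallel>\<^sub>Y\<close> and the supremum of \<open>\<langle>a, x\<rangle>\<close> over the \<open>X\<close>-unit ball are attained by explicit
  vectors built from the partial sums of \<open>a\<close>.

  For tightness, first-order optimality of an \<open>X2\<close>-decomposition \<open>c = a + b\<close> gives
  \<open>\<parallel>a\<parallel>\<^sub>X \<parallel>b\<parallel>\<^sub>Y \<le> \<langle>a, b\<rangle>\<close>, so an optimal preimage \<open>w\<close> of \<open>b\<close> equals \<open>\<parallel>b\<parallel>\<^sub>Y sgn (D\<^sup>\<star> a)\<close>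
  on the support of \<open>D\<^sup>\<star> a\<close>. Interpolating these signs by a sequence \<open>v\<close> with \<open>|v| \<le> 1\<close>
  that bends only on that support, downwards at \<open>+1\<close> and upwards at \<open>-1\<close>, gives \<open>u = D v\<close>
  with \<open>\<parallel>u\<parallel>\<^sub>Y \<le> 1\<close>, \<open>\<langle>u, a\<rangle> = \<parallel>a\<parallel>\<^sub>X\<close> and \<open>\<langle>u, b\<rangle> = \<parallel>b\<parallel>\<^sub>Y \<parallel>u\<parallel>\<^sub>X\<close>. Pairing any other
  decomposition \<open>c = a' + b'\<close> with \<open>u\<close> shows that it cannot improve both norms.
\<close>

section \<open>The difference map and its transpose\<close>

lemma V_vadd: "a \<in> V n \<Longrightarrow> b \<in> V n \<Longrightarrow> vadd a b \<in> V n"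
  unfolding V_def vadd_def by auto

lemma V_vscale: "a \<in> V n \<Longrightarrow> vscale r a \<in> V n"
  unfolding V_def vscale_def by auto

lemma W_vadd: "a \<in> W n \<Longrightarrow> b \<in> W n \<Longrightarrow> vadd a b \<in> W n"
  unfolding W_def vadd_def by auto

lemma W_vscale: "a \<in> W n \<Longrightarrow> vscale r a \<in> W n"
  unfolding W_def vscale_def by auto

lemma abs_le_supnormW: "j \<le> n \<Longrightarrow> \<bar>b j\<bar> \<le> supnormW n b"
  unfolding supnormW_def by (rule Max_ge) auto

lemma supnormW_le: "(\<And>j. j \<le> n \<Longrightarrow> \<bar>b j\<bar> \<le> M) \<Longrightarrow> supnormW n b \<le> M"
  unfolding supnormW_def by (subst Max_le_iff) auto

lemma supnormW_nonneg: "0 \<le> supnormW n b"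
  using abs_le_supnormW[of 0 n b] by simp

lemma supnormW_vadd: "supnormW n (vadd a b) \<le> supnormW n a + supnormW n b"
proof (rule supnormW_le)
  fix j assume "j \<le> n"
  then have "\<bar>a j\<bar> \<le> supnormW n a" "\<bar>b j\<bar> \<le> supnormW n b" by (auto intro: abs_le_supnormW)
  then show "\<bar>vadd a b j\<bar> \<le> supnormW n a + supnormW n b" unfolding vadd_def by linarith
qed

lemma supnormW_vscale: "supnormW n (vscale r b) \<le> \<bar>r\<bar> * supnormW n b"
  by (rule supnormW_le) (auto simp: vscale_def abs_mult intro: mult_left_mono abs_le_supnormW)

lemma Dm_in_V: "Dm n v \<in> V n"
  unfolding Dm_def V_def by auto

lemma Dm_vadd: "Dm n (vadd a b) = vadd (Dm n a) (Dm n b)"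
  unfolding Dm_def vadd_def by auto

lemma Dm_vscale: "Dm n (vscale r a) = vscale r (Dm n a)"
  unfolding Dm_def vscale_def by (auto simp: algebra_simps)

lemma Dstar_vadd: "Dstar n (vadd a b) j = Dstar n a j + Dstar n b j"
  unfolding Dstar_def vadd_def by auto

lemma Dstar_vscale: "Dstar n (vscale r a) j = r * Dstar n a j"
  unfolding Dstar_def vscale_def by (auto simp: algebra_simps)

lemma Dstar_Dm: "Dstar n (Dm n v) j = (if j \<le> n then
   (if j = 0 then 0 else v j - v (j - 1)) - (if j < n then v (Suc j) - v j else 0) else 0)"
  unfolding Dstar_def Dm_def by auto

lemma Dm_eq_0_imp_const:
  assumes "Dm n v = (\<lambda>_. 0)" and "j \<le> n"
  shows "v j = v 0"
  using assms(2)
proof (induction j)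
  case (Suc j)
  have "Dm n v j = 0" using assms(1) by simp
  with Suc show ?case unfolding Dm_def by auto
qed simp

lemma Dstar_eq_0_imp_zero:
  assumes "a \<in> V n" and "\<And>j. j \<le> n \<Longrightarrow> Dstar n a j = 0"
  shows "a = (\<lambda>_. 0)"
proof -
  have "j < n \<longrightarrow> a j = 0" for j
  proof (induction j)
    case 0 then show ?case using assms(2)[of 0] unfolding Dstar_def by auto
  next
    case (Suc j) then show ?case using assms(2)[of "Suc j"] unfolding Dstar_def by auto
  qed
  then show ?thesis using assms(1) unfolding V_def by (intro ext) (simp add: not_less; metis le_less_linear)
qed

lemma ip_Dm: "ip n (Dm n w) z = (\<Sum>j\<le>n. w j * Dstar n z j)"
proof -
  have "(\<Sum>j\<le>n. w j * Dstar n z j) = (\<Sum>j\<le>n. w j * (if j = 0 then 0 else z (j - 1)))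
     - (\<Sum>j\<le>n. w j * (if j < n then z j else 0))"
    unfolding Dstar_def by (simp add: right_diff_distrib sum_subtractf)
  also have "(\<Sum>j\<le>n. w j * (if j = 0 then 0 else z (j - 1))) = (\<Sum>i<n. w (Suc i) * z i)"
    by (cases n) (simp_all only: sum.atMost_Suc_shift lessThan_Suc_atMost, simp_all)
  also have "(\<Sum>j\<le>n. w j * (if j < n then z j else 0)) = (\<Sum>i<n. w i * z i)"
    by (simp add: lessThan_Suc_atMost[symmetric])
  finally show ?thesis unfolding ip_def Dm_def by (simp add: left_diff_distrib sum_subtractf)
qed

lemma ip_Dm_le: "ip n (Dm n w) z \<le> supnormW n w * normX n z"
proof -
  have "ip n (Dm n w) z = (\<Sum>j\<le>n. w j * Dstar n z j)" by (rule ip_Dm)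
  also have "\<dots> \<le> (\<Sum>j\<le>n. supnormW n w * \<bar>Dstar n z j\<bar>)"
  proof (rule sum_mono)
    fix j assume "j \<in> {..n}"
    then have "\<bar>w j\<bar> * \<bar>Dstar n z j\<bar> \<le> supnormW n w * \<bar>Dstar n z j\<bar>"
      by (simp add: abs_le_supnormW mult_right_mono)
    then show "w j * Dstar n z j \<le> supnormW n w * \<bar>Dstar n z j\<bar>"
      by (metis abs_ge_self abs_mult order_trans)
  qed
  also have "\<dots> = supnormW n w * normX n z"
    unfolding normX_def norm1W_def by (simp add: sum_distrib_left)
  finally show ?thesis .
qed

lemma ip_Dm_eq_imp_aligned:
  assumes "supnormW n w * normX n z \<le> ip n (Dm n w) z" and "j \<le> n"
  shows "w j * Dstar n z j = supnormW n w * \<bar>Dstar n z j\<bar>"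
proof -
  define f where "f j = supnormW n w * \<bar>Dstar n z j\<bar> - w j * Dstar n z j" for j
  have f_nonneg: "\<forall>j\<in>{..n}. 0 \<le> f j"
  proof
    fix j assume "j \<in> {..n}"
    then have "\<bar>w j\<bar> * \<bar>Dstar n z j\<bar> \<le> supnormW n w * \<bar>Dstar n z j\<bar>"
      by (simp add: abs_le_supnormW mult_right_mono)
    then show "0 \<le> f j" unfolding f_def by (metis abs_ge_self abs_mult diff_ge_0_iff_ge order_trans)
  qed
  have "(\<Sum>j\<le>n. f j) = supnormW n w * normX n z - ip n (Dm n w) z"
    unfolding f_def normX_def norm1W_def ip_Dm by (simp add: sum_subtractf sum_distrib_left)
  with assms(1) f_nonneg have "(\<Sum>j\<le>n. f j) = 0"
    by (metis antisym diff_le_0_iff_le sum_nonneg)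
  then show ?thesis using f_nonneg assms(2) sum_nonneg_eq_0_iff[of "{..n}" f] by (simp add: f_def)
qed

lemma sum_Dstar_eq_0: "(\<Sum>j\<le>n. Dstar n a j) = 0"
  using ip_Dm[of n "\<lambda>_. 1" a] unfolding ip_def Dm_def by simp

section \<open>The norms and their duality\<close>

lemma normX_nonneg: "0 \<le> normX n a"
  unfolding normX_def norm1W_def by (simp add: sum_nonneg)

lemma normX_vscale: "normX n (vscale r a) = \<bar>r\<bar> * normX n a"
  unfolding normX_def norm1W_def by (simp add: Dstar_vscale abs_mult sum_distrib_left)

lemma normX_vadd: "normX n (vadd a b) \<le> normX n a + normX n b"
  unfolding normX_def norm1W_def Dstar_vadd
  by (simp add: sum.distrib[symmetric] sum_mono abs_triangle_ineq)

lemma normX_eq_0_iff: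
  assumes "a \<in> V n"
  shows "normX n a = 0 \<longleftrightarrow> a = (\<lambda>_. 0)"
proof
  assume "normX n a = 0"
  then have "\<forall>j\<in>{..n}. \<bar>Dstar n a j\<bar> = 0"
    unfolding normX_def norm1W_def by (subst sum_nonneg_eq_0_iff[symmetric]) auto
  then show "a = (\<lambda>_. 0)" by (intro Dstar_eq_0_imp_zero[OF assms]) auto
qed (simp add: normX_def norm1W_def Dstar_def)

lemma normX_is_norm: "is_norm_on (V n) (normX n)"
  unfolding is_norm_on_def by (simp add: normX_nonneg normX_eq_0_iff normX_vscale normX_vadd)

lemma normY_le_supnormW: "b \<in> W n \<Longrightarrow> normY n (Dm n b) \<le> supnormW n b"
  unfolding normY_def using supnormW_nonneg
  by (intro cInf_lower) (auto simp: bdd_below_def intro!: exI[of _ 0])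

text \<open>A preimage \<open>b\<close> and a test vector \<open>x\<close> certify each other's optimality as soon as
  \<open>\<parallel>b\<parallel>\<^sub>\<infinity> \<le> \<langle>a, x\<rangle>\<close>, by Hoelder's inequality \<open>\<langle>D b', x\<rangle> \<le> \<parallel>b'\<parallel>\<^sub>\<infinity> \<parallel>x\<parallel>\<^sub>X\<close>.\<close>
lemma normY_certificate:
  assumes "b \<in> W n" "Dm n b = a" "normX n x \<le> 1" "supnormW n b \<le> ip n a x"
  shows "normY n a = supnormW n b" and "normY n a = ip n a x"
proof -
  have "ip n a x \<le> supnormW n b'" if "Dm n b' = a" for b'
  proof -
    have "ip n a x \<le> supnormW n b' * normX n x" using ip_Dm_le[of n b' x] that by simp
    also have "\<dots> \<le> supnormW n b'" using assms(3) supnormW_nonneg by (simp add: mult_left_le)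
    finally show ?thesis .
  qed
  then have "ip n a x \<le> normY n a"
    unfolding normY_def using assms(1,2) by (intro cInf_greatest) auto
  moreover have "normY n a \<le> supnormW n b" using normY_le_supnormW[OF assms(1)] assms(2) by simp
  ultimately show "normY n a = supnormW n b" "normY n a = ip n a x" using assms(4) by linarith+
qed

text \<open>The optimal preimage is the centred sequence of partial sums \<open>P\<close> of \<open>a\<close>;
  the test vector \<open>x\<close> has \<open>D\<^sup>\<star> x = (e\<^sub>p - e\<^sub>q)/2\<close> for a maximum \<open>p\<close> and a minimum \<open>q\<close> of \<open>P\<close>.\<close>
lemma exists_normY_certificate:
  assumes "a \<in> V n"
  obtains b x where "b \<in> W n" "Dm n b = a" "x \<in> V n" "normX n x \<le> 1" "supnormW n b \<le> ip n a x"
proof -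
  define P where "P k = (\<Sum>i<k. a i)" for k
  obtain p where p: "p \<le> n" "\<forall>j\<le>n. P j \<le> P p"
    using Max_in[of "P ` {..n}"] Max_ge[of "P ` {..n}"] by fastforce
  obtain q where q: "q \<le> n" "\<forall>j\<le>n. P q \<le> P j"
    using Min_in[of "P ` {..n}"] Min_le[of "P ` {..n}"] by fastforce
  define b where "b j = (if j \<le> n then P j - (P p + P q) / 2 else 0)" for j
  define x where "x j = (if j < n then (if q \<le> j then 1/2 else 0) - (if p \<le> j then 1/2 else 0)
    else (0::real))" for j
  have b: "b \<in> W n" "Dm n b = a"
    using assms unfolding W_def V_def b_def Dm_def P_def by auto
  have Dstar_x: "Dstar n x j = (if j = p then 1/2 else 0) - (if j = q then 1/2 else 0)"
    if "j \<le> n" for j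
    using that p(1) q(1) unfolding Dstar_def x_def by auto
  have "normX n x \<le> (\<Sum>j\<le>n. (if j = p then 1/2 else 0) + (if j = q then 1/2 else 0))"
    unfolding normX_def norm1W_def by (intro sum_mono) (auto simp: Dstar_x)
  also have "\<dots> = 1" using p(1) q(1) by (simp add: sum.distrib)
  finally have "normX n x \<le> 1" .
  moreover have "ip n a x = (P p - P q) / 2"
  proof -
    have "ip n a x = (\<Sum>j\<le>n. b j * Dstar n x j)" using ip_Dm[of n b x] b(2) by simp
    also have "\<dots> = (\<Sum>j\<le>n. (if j = p then b j / 2 else 0) - (if j = q then b j / 2 else 0))"
      by (intro sum.cong) (simp_all add: Dstar_x)
    also have "\<dots> = (b p - b q) / 2"
      using p(1) q(1) by (simp add: sum_subtractf diff_divide_distrib)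
    finally show ?thesis using p(1) q(1) unfolding b_def by simp
  qed
  moreover have "supnormW n b \<le> (P p - P q) / 2"
  proof (rule supnormW_le)
    fix j assume "j \<le> n"
    then have "P q \<le> P j" "P j \<le> P p" using p(2) q(2) by auto
    then have "\<bar>P j - (P p + P q) / 2\<bar> \<le> (P p - P q) / 2"
      unfolding abs_le_iff by (simp add: field_simps)
    then show "\<bar>b j\<bar> \<le> (P p - P q) / 2" using \<open>j \<le> n\<close> unfolding b_def by simp
  qed
  moreover have "x \<in> V n" unfolding V_def x_def by auto
  ultimately show ?thesis using that b by simp
qed

lemma normY_attained:
  assumes "a \<in> V n"
  obtains b where "b \<in> W n" "Dm n b = a" "supnormW n b = normY n a"
proof -
  obtain b x where "b \<in> W n" "Dm n b = a" "normX n x \<le> 1" "supnormW n b \<le> ip n a x"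
    using exists_normY_certificate[OF assms] .
  with normY_certificate(1) that show thesis by metis
qed

lemma normY_dual_attained:
  assumes "a \<in> V n"
  obtains x where "x \<in> V n" "normX n x \<le> 1" "ip n a x = normY n a"
proof -
  obtain b x where "b \<in> W n" "Dm n b = a" "x \<in> V n" "normX n x \<le> 1" "supnormW n b \<le> ip n a x"
    using exists_normY_certificate[OF assms] .
  with normY_certificate(2) that show thesis by metis
qed

lemma ip_le_normY_normX:
  assumes "a \<in> V n"
  shows "ip n a x \<le> normY n a * normX n x"
proof -
  obtain b where "Dm n b = a" "supnormW n b = normY n a" using normY_attained[OF assms] .
  with ip_Dm_le[of n b x] show ?thesis by simp
qed

lemma normY_nonneg:
  assumes "a \<in> V n"
  shows "0 \<le> normY n a"
proof -
  obtain b where "supnormW n b = normY n a" using normY_attained[OF assms] .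
  with supnormW_nonneg show ?thesis by metis
qed

lemma normY_eq_Sup:
  assumes "a \<in> V n"
  shows "normY n a = Sup {ip n a x | x. x \<in> V n \<and> normX n x \<le> 1}"
proof (rule cSup_eq_maximum[symmetric])
  obtain x where "x \<in> V n" "normX n x \<le> 1" "ip n a x = normY n a"
    using normY_dual_attained[OF assms] .
  then show "normY n a \<in> {ip n a x | x. x \<in> V n \<and> normX n x \<le> 1}" by force
next
  fix y assume "y \<in> {ip n a x | x. x \<in> V n \<and> normX n x \<le> 1}"
  then obtain x where x: "y = ip n a x" "normX n x \<le> 1" by blast
  have "y \<le> normY n a * normX n x" using ip_le_normY_normX[OF assms] x(1) by simp
  also have "\<dots> \<le> normY n a" using x(2) normY_nonneg[OF assms] by (simp add: mult_left_le)
  finally show "y \<le> normY n a" .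
qed

lemma normY_zero: "normY n (\<lambda>_. 0) = 0"
proof -
  have "normY n (Dm n (\<lambda>_. 0)) \<le> 0"
    using normY_le_supnormW[of "\<lambda>_. 0" n] supnormW_le[of n "\<lambda>_. 0" 0] by (simp add: W_def)
  moreover have "Dm n (\<lambda>_. 0) = (\<lambda>_. 0)" by (simp add: Dm_def fun_eq_iff)
  ultimately show ?thesis using normY_nonneg[of "\<lambda>_. 0" n] by (simp add: V_def)
qed

lemma normY_eq_0_iff:
  assumes "a \<in> V n"
  shows "normY n a = 0 \<longleftrightarrow> a = (\<lambda>_. 0)"
proof
  assume "normY n a = 0"
  then obtain b where b: "Dm n b = a" "supnormW n b = 0" using normY_attained[OF assms] by metis
  then have "b j = 0" if "j \<le> n" for j using abs_le_supnormW[OF that, of b] by simp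
  then show "a = (\<lambda>_. 0)" using b(1) unfolding Dm_def by (auto intro!: ext)
qed (simp add: normY_zero)

lemma normY_vscale_le:
  assumes "a \<in> V n"
  shows "normY n (vscale r a) \<le> \<bar>r\<bar> * normY n a"
proof -
  obtain b where b: "b \<in> W n" "Dm n b = a" "supnormW n b = normY n a"
    using normY_attained[OF assms] .
  have "normY n (vscale r a) \<le> supnormW n (vscale r b)"
    using normY_le_supnormW[OF W_vscale[OF b(1)]] b(2) by (simp add: Dm_vscale)
  also have "\<dots> \<le> \<bar>r\<bar> * normY n a" using supnormW_vscale[of n r b] b(3) by simp
  finally show ?thesis .
qed

lemma normY_vscale:
  assumes "a \<in> V n"
  shows "normY n (vscale r a) = \<bar>r\<bar> * normY n a"
proof (cases "r = 0")
  case True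
  then show ?thesis by (simp add: vscale_def normY_zero)
next
  case False
  have "vscale (1/r) (vscale r a) = a" using False unfolding vscale_def by auto
  then have "normY n a \<le> \<bar>1/r\<bar> * normY n (vscale r a)"
    using normY_vscale_le[OF V_vscale[OF assms], of "1/r" r] by simp
  then have "\<bar>r\<bar> * normY n a \<le> normY n (vscale r a)" using False by (simp add: field_simps)
  with normY_vscale_le[OF assms, of r] show ?thesis by simp
qed

lemma normY_vadd:
  assumes "a \<in> V n" "b \<in> V n"
  shows "normY n (vadd a b) \<le> normY n a + normY n b"
proof -
  obtain wa where wa: "wa \<in> W n" "Dm n wa = a" "supnormW n wa = normY n a"
    using normY_attained[OF assms(1)] .
  obtain wb where wb: "wb \<in> W n" "Dm n wb = b" "supnormW n wb = normY n b"
    using normY_attained[OF assms(2)] .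
  have "normY n (vadd a b) \<le> supnormW n (vadd wa wb)"
    using normY_le_supnormW[OF W_vadd[OF wa(1) wb(1)]] wa(2) wb(2) by (simp add: Dm_vadd)
  also have "\<dots> \<le> normY n a + normY n b" using supnormW_vadd[of n wa wb] wa(3) wb(3) by simp
  finally show ?thesis .
qed

lemma normY_is_norm: "is_norm_on (V n) (normY n)"
  unfolding is_norm_on_def
  by (simp add: normY_nonneg normY_eq_0_iff normY_vscale normY_vadd)

section \<open>Optimality of \<open>X2\<close>-decompositions\<close>

lemma ip_commute: "ip n a b = ip n b a"
  unfolding ip_def by (simp add: mult.commute)

lemma ip_vadd_right: "ip n z (vadd a b) = ip n z a + ip n z b"
  unfolding ip_def vadd_def by (simp add: distrib_left sum.distrib)

lemma ip_vscale_right: "ip n z (vscale t a) = t * ip n z a"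
  unfolding ip_def vscale_def by (simp add: sum_distrib_left algebra_simps)

lemma ip_diff_right: "ip n z (\<lambda>i. a i - b i) = ip n z a - ip n z b"
  unfolding ip_def by (simp add: right_diff_distrib sum_subtractf)

lemma ip_self_diff_scaled:
  "ip n (\<lambda>i. b i - s * d i) (\<lambda>i. b i - s * d i) = ip n b b - 2 * s * ip n b d + s\<^sup>2 * ip n d d"
proof -
  have "ip n (\<lambda>i. b i - s * d i) (\<lambda>i. b i - s * d i)
      = (\<Sum>i<n. b i * b i - 2 * s * (b i * d i) + s\<^sup>2 * (d i * d i))"
    unfolding ip_def by (intro sum.cong) (auto simp: algebra_simps power2_eq_square)
  also have "\<dots> = ip n b b - 2 * s * ip n b d + s\<^sup>2 * ip n d d"
    unfolding ip_def by (simp add: sum.distrib sum_subtractf sum_distrib_left)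
  finally show ?thesis .
qed

text \<open>Moving \<open>a\<close> a small step \<open>s\<close> towards \<open>a'\<close> does not increase \<open>N a\<close> (convexity), but
  shrinks \<open>\<parallel>b\<parallel>\<^sub>2\<close> to first order if \<open>\<langle>b, a' - a\<rangle> > 0\<close>.\<close>
lemma X2_decomp_variational:
  assumes N: "is_norm_on (V n) N"
    and decomp: "is_decomp (V n) N (norm2 n) c a b"
    and a': "a' \<in> V n" "N a' \<le> N a"
  shows "ip n b a' \<le> ip n b a"
proof (rule ccontr)
  assume "\<not> ip n b a' \<le> ip n b a"
  define d where "d i = a' i - a i" for i
  define g where "g = ip n b d"
  define h where "h = ip n d d"
  have g: "g > 0" using \<open>\<not> _\<close> unfolding g_def d_def ip_diff_right by simp
  have h: "h \<ge> 0" unfolding h_def ip_def by (simp add: sum_nonneg)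
  define s where "s = (if h = 0 then 1 else min 1 (g / h))"
  have s: "0 < s" "s \<le> 1" "s * h \<le> g"
    using g h by (auto simp: s_def pos_le_divide_eq min_def)
  from decomp have aV: "a \<in> V n" and bV: "b \<in> V n" and c: "c = vadd a b"
    and opt: "\<forall>a'\<in>V n. \<forall>b'\<in>V n. c = vadd a' b' \<longrightarrow> N a' > N a \<or> norm2 n b' > norm2 n b
       \<or> (N a' = N a \<and> norm2 n b' = norm2 n b)"
    unfolding is_decomp_def by auto
  define as where "as = vadd (vscale (1 - s) a) (vscale s a')"
  define bs where "bs i = b i - s * d i" for i
  have asV: "as \<in> V n" unfolding as_def using aV a' by (intro V_vadd V_vscale)
  have bsV: "bs \<in> V n" using bV aV a' unfolding bs_def d_def V_def by auto
  have c_s: "c = vadd as bs"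
    unfolding c as_def bs_def d_def vadd_def vscale_def by (auto simp: algebra_simps)
  have "N as \<le> N (vscale (1 - s) a) + N (vscale s a')"
    unfolding as_def using N aV a' V_vscale unfolding is_norm_on_def by blast
  also have "\<dots> = (1 - s) * N a + s * N a'" using N aV a' s unfolding is_norm_on_def by simp
  also have "\<dots> \<le> N a" using a'(2) s by (simp add: algebra_simps mult_left_mono)
  finally have "N as \<le> N a" .
  with opt asV bsV c_s have "norm2 n b \<le> norm2 n bs" by force
  then have "ip n b b \<le> ip n bs bs" unfolding norm2_def by simp
  also have "ip n bs bs = ip n b b - 2 * s * g + s\<^sup>2 * h"
    unfolding bs_def g_def h_def by (rule ip_self_diff_scaled)
  finally have "2 * s * g \<le> s * (s * h)" by (simp add: power2_eq_square algebra_simps)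
  also have "\<dots> \<le> s * g" using s by (simp add: mult_left_mono)
  finally show False using s g by (simp add: mult_pos_pos)
qed

lemma X2_decomp_normX_normY_le_ip:
  assumes decomp: "is_decomp (V n) (normX n) (norm2 n) c a b"
  shows "normX n a * normY n b \<le> ip n b a"
proof -
  have bV: "b \<in> V n" using decomp unfolding is_decomp_def by auto
  obtain x where x: "x \<in> V n" "normX n x \<le> 1" "ip n b x = normY n b"
    using normY_dual_attained[OF bV] .
  have "normX n (vscale (normX n a) x) \<le> normX n a"
    using x(2) normX_nonneg[of n a] by (simp add: normX_vscale mult_left_le)
  with X2_decomp_variational[OF normX_is_norm decomp V_vscale[OF x(1)]]
  have "ip n b (vscale (normX n a) x) \<le> ip n b a" .
  then show ?thesis using x(3) by (simp add: ip_vscale_right)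
qed

section \<open>Sign interpolants\<close>

text \<open>\<open>D\<^sup>\<star>(D v)\<close> is minus the discrete Laplacian of \<open>v\<close>: it vanishes where \<open>v\<close> is locally affine,
  is nonnegative where \<open>v\<close> bends down and nonpositive where it bends up.\<close>
definition sign_interpolant :: "nat \<Rightarrow> nat set \<Rightarrow> (nat \<Rightarrow> real) \<Rightarrow> (nat \<Rightarrow> real) \<Rightarrow> bool" where
  "sign_interpolant N K \<sigma> v \<longleftrightarrow> (\<forall>j\<le>N. \<bar>v j\<bar> \<le> 1) \<and> (\<forall>j\<in>K. v j = \<sigma> j) \<and>
     (\<forall>j\<le>N. j \<notin> K \<longrightarrow> Dstar N (Dm N v) j = 0) \<and> (\<forall>j\<in>K. 0 \<le> \<sigma> j * Dstar N (Dm N v) j)"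

lemma Dstar_Dm_affine_extension:
  assumes "M < N" "j \<le> N"
    and "\<And>i. i \<le> M \<Longrightarrow> v' i = v i" "\<And>i. M \<le> i \<Longrightarrow> v' i = v M + s * (real i - real M)"
  shows "Dstar N (Dm N v') j = (if j < M then Dstar M (Dm M v) j
    else if j = M then Dstar M (Dm M v) M - s else if j < N then 0 else s)"
proof -
  have slope: "v' (Suc i) - v' i = s" if "M \<le> i" for i
    using that assms(4)[of i] assms(4)[of "Suc i"] by (simp add: algebra_simps)
  consider "j < M" | "j = M" | "M < j" "j < N" | "j = N" using assms(1,2) by linarith
  then show ?thesis
  proof cases
    case 1
    then show ?thesis using assms(1) by (simp add: Dstar_Dm assms(3))
  next
    case 2
    then show ?thesis using assms(1) slope[of M] by (simp add: Dstar_Dm assms(3))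
  next
    case 3
    then show ?thesis using slope[of j] slope[of "j - 1"] by (simp add: Dstar_Dm)
  next
    case 4
    then show ?thesis using assms(1) slope[of "j - 1"] by (simp add: Dstar_Dm)
  qed
qed

lemma sign_interpolant_extend:
  assumes v: "sign_interpolant M K \<sigma> v" and "K \<subseteq> {..M}" "M < N"
  shows "sign_interpolant N K \<sigma> (\<lambda>i. if i \<le> M then v i else v M)"
proof -
  have D: "Dstar N (Dm N (\<lambda>i. if i \<le> M then v i else v M)) j
      = (if j \<le> M then Dstar M (Dm M v) j else 0)" if "j \<le> N" for j
    using Dstar_Dm_affine_extension[OF \<open>M < N\<close> that, of "\<lambda>i. if i \<le> M then v i else v M" v 0]
    by (auto split: if_splits)
  have KM: "j \<le> M" "j \<le> N" if "j \<in> K" for j using that assms(2,3) by auto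
  show ?thesis
    unfolding sign_interpolant_def
  proof (intro conjI ballI allI impI)
    fix j assume "j \<in> K"
    with v KM[OF this] show "0 \<le> \<sigma> j * Dstar N (Dm N (\<lambda>i. if i \<le> M then v i else v M)) j"
      by (simp add: D sign_interpolant_def)
  qed (use v KM in \<open>auto simp: D sign_interpolant_def\<close>)
qed

lemma sign_interpolant_insert:
  assumes v: "sign_interpolant M K \<sigma> v" and "M \<in> K" "K \<subseteq> {..M}" "M < N"
    and \<sigma>: "\<bar>\<sigma> M\<bar> = 1" "\<bar>\<sigma> N\<bar> = 1"
  defines "s \<equiv> (\<sigma> N - \<sigma> M) / (real N - real M)"
  shows "sign_interpolant N (insert N K) \<sigma> (\<lambda>i. if i \<le> M then v i else \<sigma> M + s * (real i - real M))"
    (is "sign_interpolant N _ \<sigma> ?v")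
proof -
  have vM: "v M = \<sigma> M" using v \<open>M \<in> K\<close> unfolding sign_interpolant_def by auto
  have D: "Dstar N (Dm N ?v) j = (if j < M then Dstar M (Dm M v) j
      else if j = M then Dstar M (Dm M v) M - s else if j < N then 0 else s)" if "j \<le> N" for j
    by (rule Dstar_Dm_affine_extension[OF \<open>M < N\<close> that]) (auto simp: vM)
  have NM: "real N - real M > 0" using \<open>M < N\<close> by simp
  have "\<sigma> N * \<sigma> N = 1" "\<sigma> M * \<sigma> M = 1" "\<sigma> N * \<sigma> M \<le> 1"
    using \<sigma> by (auto simp: abs_if split: if_splits)
  then have s_sign: "0 \<le> \<sigma> N * s" "\<sigma> M * s \<le> 0"
    using NM by (auto simp: s_def right_diff_distrib mult.commute intro: divide_nonneg_pos divide_nonpos_pos)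
  have bounded: "\<bar>?v j\<bar> \<le> 1" if "j \<le> N" for j
  proof (cases "j \<le> M")
    case False
    define t where "t = (real j - real M) / (real N - real M)"
    have t: "0 \<le> t" "t \<le> 1" using False that NM by (auto simp: t_def)
    have "s * (real j - real M) = (\<sigma> N - \<sigma> M) * t" by (simp add: s_def t_def)
    then have "?v j = (1 - t) * \<sigma> M + t * \<sigma> N" using False by (simp add: algebra_simps)
    also have "\<bar>\<dots>\<bar> \<le> (1 - t) * 1 + t * 1"
      using t \<sigma> by (intro order_trans[OF abs_triangle_ineq] add_mono) (simp_all add: abs_mult)
    finally show ?thesis by simp
  qed (use v that in \<open>simp add: sign_interpolant_def\<close>)
  show ?thesis
    unfolding sign_interpolant_def
  proof (intro conjI ballI allI impI)
    fix j assume "j \<in> insert N K"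
    then show "?v j = \<sigma> j"
      using v assms(3) NM by (auto simp: sign_interpolant_def s_def subset_eq)
    consider "j = N" | "j = M" | "j \<in> K" "j < M"
      using \<open>j \<in> insert N K\<close> assms(3) by fastforce
    then show "0 \<le> \<sigma> j * Dstar N (Dm N ?v) j"
      using v \<open>M \<in> K\<close> \<open>M < N\<close> s_sign
      by cases (auto simp: D sign_interpolant_def right_diff_distrib)
  next
    fix j assume "j \<le> N" "j \<notin> insert N K"
    then show "Dstar N (Dm N ?v) j = 0"
      using v \<open>M \<in> K\<close> by (auto simp: D sign_interpolant_def)
  qed (rule bounded)
qed

lemma exists_sign_interpolant:
  assumes "K \<subseteq> {..N}" "K \<noteq> {}" "\<forall>j\<in>K. \<bar>\<sigma> j\<bar> = 1"
  shows "\<exists>v. sign_interpolant N K \<sigma> v"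
  using assms
proof (induction N arbitrary: K rule: less_induct)
  case (less N)
  show ?case
  proof (cases "N \<in> K")
    case False
    with less.prems(1,2) obtain M where M: "N = Suc M" "K \<subseteq> {..M}"
      by (cases N) (auto simp: subset_eq le_Suc_eq)
    with less.IH[of M K] less.prems sign_interpolant_extend show ?thesis by blast
  next
    case True
    show ?thesis
    proof (cases "K = {N}")
      case True
      then have "sign_interpolant N K \<sigma> (\<lambda>_. \<sigma> N)"
        using less.prems(3) by (simp add: sign_interpolant_def Dstar_Dm)
      then show ?thesis by blast
    next
      case False
      define K' where "K' = K - {N}"
      have "finite K'" "K' \<noteq> {}" using less.prems(1) False \<open>N \<in> K\<close>
        by (auto simp: K'_def intro: finite_subset)
      define M where "M = Max K'"
      have "M \<in> K'" "K' \<subseteq> {..M}" using \<open>finite K'\<close> \<open>K' \<noteq> {}\<close> by (auto simp: M_def)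
      then have "M < N" using less.prems(1) by (auto simp: K'_def)
      obtain v where "sign_interpolant M K' \<sigma> v"
        using less.IH[OF \<open>M < N\<close> \<open>K' \<subseteq> {..M}\<close> \<open>K' \<noteq> {}\<close>] less.prems(3) by (auto simp: K'_def)
      from sign_interpolant_insert[OF this \<open>M \<in> K'\<close> \<open>K' \<subseteq> {..M}\<close> \<open>M < N\<close>]
      show ?thesis using less.prems(3) \<open>M \<in> K'\<close> \<open>N \<in> K\<close> by (auto simp: K'_def insert_absorb)
    qed
  qed
qed

section \<open>Tightness\<close>

lemma Dstar_has_both_signs:
  assumes "a \<in> V n" "a \<noteq> (\<lambda>_. 0)"
  obtains p q where "p \<le> n" "0 < Dstar n a p" "q \<le> n" "Dstar n a q < 0"
proof -
  have nonzero: "\<exists>j\<le>n. Dstar n a j \<noteq> 0" using Dstar_eq_0_imp_zero assms by blast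
  have "\<exists>p\<le>n. 0 < Dstar n a p"
  proof (rule ccontr)
    assume "\<not> ?thesis"
    then have "\<forall>j\<in>{..n}. 0 \<le> - Dstar n a j" by auto
    moreover have "(\<Sum>j\<le>n. - Dstar n a j) = 0" using sum_Dstar_eq_0[of n a] by (simp add: sum_negf)
    ultimately show False using nonzero sum_nonneg_eq_0_iff[of "{..n}" "\<lambda>j. - Dstar n a j"] by auto
  qed
  moreover have "\<exists>q\<le>n. Dstar n a q < 0"
  proof (rule ccontr)
    assume "\<not> ?thesis"
    then have "\<forall>j\<in>{..n}. 0 \<le> Dstar n a j" by auto
    then show False using nonzero sum_Dstar_eq_0[of n a] sum_nonneg_eq_0_iff[of "{..n}"] by auto
  qed
  ultimately show thesis using that by blast
qed

text \<open>The test vector is \<open>u = D v\<close> for a sign interpolant \<open>v\<close> of \<open>sgn (D\<^sup>\<star> a)\<close> on the support of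
  \<open>D\<^sup>\<star> a\<close>; it is nonzero because \<open>v\<close> takes both values \<open>1\<close> and \<open>-1\<close>.\<close>
lemma exists_aligned_test_vector:
  assumes aV: "a \<in> V n" and a0: "a \<noteq> (\<lambda>_. 0)"
  obtains u where "u \<in> V n" "normY n u \<le> 1" "0 < normX n u" "ip n u a = normX n a"
    "\<forall>j\<le>n. 0 \<le> Dstar n a j * Dstar n u j \<and> (Dstar n a j = 0 \<longrightarrow> Dstar n u j = 0)"
proof -
  define K where "K = {j. j \<le> n \<and> Dstar n a j \<noteq> 0}"
  define \<sigma> where "\<sigma> j = sgn (Dstar n a j)" for j
  obtain p q where pq: "p \<le> n" "0 < Dstar n a p" "q \<le> n" "Dstar n a q < 0"
    using Dstar_has_both_signs[OF aV a0] .
  have "p \<in> K" "q \<in> K" using pq by (auto simp: K_def)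
  have "K \<subseteq> {..n}" "K \<noteq> {}" "\<forall>j\<in>K. \<bar>\<sigma> j\<bar> = 1"
    using \<open>p \<in> K\<close> by (auto simp: K_def \<sigma>_def)
  then obtain v where "sign_interpolant n K \<sigma> v" using exists_sign_interpolant by blast
  define u where "u = Dm n v"
  have v_bound: "\<And>j. j \<le> n \<Longrightarrow> \<bar>v j\<bar> \<le> 1"
    and v_sign: "\<And>j. j \<in> K \<Longrightarrow> v j = \<sigma> j"
    and u_off: "\<And>j. j \<le> n \<Longrightarrow> j \<notin> K \<Longrightarrow> Dstar n u j = 0"
    and u_on: "\<And>j. j \<in> K \<Longrightarrow> 0 \<le> \<sigma> j * Dstar n u j"
    using \<open>sign_interpolant n K \<sigma> v\<close> unfolding sign_interpolant_def u_def by blast+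
  have Y: "normY n u \<le> 1"
  proof -
    define v' where "v' j = (if j \<le> n then v j else 0)" for j
    have "v' \<in> W n" "Dm n v' = u" by (auto simp: v'_def W_def u_def Dm_def)
    moreover have "supnormW n v' \<le> 1" by (rule supnormW_le) (simp add: v'_def v_bound)
    ultimately show ?thesis using normY_le_supnormW by fastforce
  qed
  have X: "0 < normX n u"
  proof -
    have "v p = 1" "v q = -1"
      using v_sign[OF \<open>p \<in> K\<close>] v_sign[OF \<open>q \<in> K\<close>] pq(2,4) by (simp_all add: \<sigma>_def)
    have "u \<noteq> (\<lambda>_. 0)"
    proof
      assume "u = (\<lambda>_. 0)"
      then have "v p = v 0" "v q = v 0"
        using Dm_eq_0_imp_const[of n v] pq(1,3) unfolding u_def by blast+
      with \<open>v p = 1\<close> \<open>v q = -1\<close> show False by simp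
    qed
    then show ?thesis using normX_eq_0_iff[of u n] normX_nonneg[of n u] Dm_in_V[of n v]
      by (simp add: u_def order_less_le)
  qed
  have ip: "ip n u a = normX n a"
  proof -
    have "v j * Dstar n a j = \<bar>Dstar n a j\<bar>" if "j \<le> n" for j
    proof (cases "j \<in> K")
      case True
      then show ?thesis using v_sign by (simp add: \<sigma>_def sgn_if)
    qed (use that in \<open>simp add: K_def\<close>)
    then show ?thesis unfolding u_def ip_Dm normX_def norm1W_def by simp
  qed
  have sign: "0 \<le> Dstar n a j * Dstar n u j" "Dstar n a j = 0 \<Longrightarrow> Dstar n u j = 0"
    if "j \<le> n" for j
  proof -
    have "Dstar n a j * Dstar n u j = \<bar>Dstar n a j\<bar> * (\<sigma> j * Dstar n u j)"
      by (simp add: \<sigma>_def abs_mult_sgn)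
    moreover have "0 \<le> \<sigma> j * Dstar n u j" using u_on u_off that by (cases "j \<in> K") simp_all
    ultimately show "0 \<le> Dstar n a j * Dstar n u j" by (metis abs_ge_zero mult_nonneg_nonneg)
    show "Dstar n a j = 0 \<Longrightarrow> Dstar n u j = 0" using u_off that by (simp add: K_def)
  qed
  show thesis by (rule that[OF Dm_in_V[of n v, folded u_def] Y X ip]) (simp add: sign)
qed

lemma mult_abs_transfer:
  fixes w x y l :: real
  assumes "w * x = l * \<bar>x\<bar>" "0 \<le> x * y" "x = 0 \<Longrightarrow> y = 0"
  shows "w * y = l * \<bar>y\<bar>"
proof (cases x "0::real" rule: linorder_cases)
  case less
  then have "w * x = (- l) * x" "y \<le> 0" using assms(1,2) by (auto simp: zero_le_mult_iff)
  then have "w = - l" using less by (simp only: mult_cancel_right) simp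
  with \<open>y \<le> 0\<close> show ?thesis by simp
next
  case greater
  then have "w * x = l * x" "0 \<le> y" using assms(1,2) by (auto simp: zero_le_mult_iff)
  with greater show ?thesis by simp
qed (use assms(3) in simp)

lemma is_decomp_zero_left:
  assumes "b \<in> V n" "c = vadd (\<lambda>_. 0) b"
  shows "is_decomp (V n) (normX n) Q c (\<lambda>_. 0) b"
  unfolding is_decomp_def
proof (intro conjI ballI impI)
  fix a' b' assume "a' \<in> V n" "b' \<in> V n" "c = vadd a' b'"
  show "normX n (\<lambda>_. 0) < normX n a' \<or> Q b < Q b' \<or> normX n a' = normX n (\<lambda>_. 0) \<and> Q b' = Q b"
  proof (cases "a' = (\<lambda>_. 0)")
    case True
    then have "b' = b" using assms(2) \<open>c = vadd a' b'\<close> by (simp add: vadd_def fun_eq_iff)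
    then show ?thesis using True by simp
  next
    case False
    then show ?thesis using normX_eq_0_iff[OF \<open>a' \<in> V n\<close>] normX_eq_0_iff[of "\<lambda>_. 0" n]
      normX_nonneg[of n a'] by (auto simp: V_def order_less_le)
  qed
qed (use assms in \<open>simp_all add: V_def\<close>)

text \<open>Testing \<open>c = a + b = a' + b'\<close> against \<open>u\<close> gives
  \<open>\<parallel>a\<parallel>\<^sub>X + \<parallel>b\<parallel>\<^sub>Y \<parallel>u\<parallel>\<^sub>X \<le> \<parallel>a'\<parallel>\<^sub>X + \<parallel>b'\<parallel>\<^sub>Y \<parallel>u\<parallel>\<^sub>X\<close>.\<close>
lemma is_decomp_XY_of_test_vector:
  assumes "a \<in> V n" "b \<in> V n" "c = vadd a b"
    and u: "u \<in> V n" "normY n u \<le> 1" "0 < normX n u"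
      "ip n u a = normX n a" "ip n u b = normY n b * normX n u"
  shows "is_decomp (V n) (normX n) (normY n) c a b"
  unfolding is_decomp_def
proof (intro conjI ballI impI)
  fix a' b' assume a'b': "a' \<in> V n" "b' \<in> V n" "c = vadd a' b'"
  have "ip n u a' \<le> normX n a'"
    using ip_le_normY_normX[OF u(1), of a'] u(2) normX_nonneg[of n a']
    by (meson mult_left_le_one_le normY_nonneg[OF u(1)] order_trans)
  moreover have "ip n u b' \<le> normY n b' * normX n u"
    using ip_le_normY_normX[OF a'b'(2), of u] by (simp add: ip_commute)
  moreover have "ip n u a + ip n u b = ip n u a' + ip n u b'"
    using assms(3) a'b'(3) by (metis ip_vadd_right)
  ultimately have key: "normX n a + normY n b * normX n u \<le> normX n a' + normY n b' * normX n u"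
    using u by linarith
  have "normX n a' = normX n a \<and> normY n b' = normY n b"
    if "normX n a' \<le> normX n a" "normY n b' \<le> normY n b"
  proof -
    have "normY n b' * normX n u \<le> normY n b * normX n u"
      using that(2) u(3) by (simp add: mult_right_mono)
    with key that(1) have "normX n a' = normX n a" by linarith
    with key u(3) that(2) show ?thesis by simp
  qed
  then show "normX n a < normX n a' \<or> normY n b < normY n b' \<or>
      normX n a' = normX n a \<and> normY n b' = normY n b"
    by (meson not_le)
qed (use assms in simp_all)

lemma X2_decomp_imp_XY_decomp:
  assumes decomp: "is_decomp (V n) (normX n) (norm2 n) c a b"
  shows "is_decomp (V n) (normX n) (normY n) c a b"
proof -
  have aV: "a \<in> V n" and bV: "b \<in> V n" and c: "c = vadd a b"
    using decomp unfolding is_decomp_def by auto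
  show ?thesis
  proof (cases "a = (\<lambda>_. 0)")
    case True
    then show ?thesis using is_decomp_zero_left[OF bV c[unfolded True]] by simp
  next
    case False
    obtain w where w: "Dm n w = b" "supnormW n w = normY n b" using normY_attained[OF bV] .
    have "supnormW n w * normX n a \<le> ip n (Dm n w) a"
      using X2_decomp_normX_normY_le_ip[OF decomp] w by (simp add: mult.commute)
    with w(2) have aligned: "w j * Dstar n a j = normY n b * \<bar>Dstar n a j\<bar>" if "j \<le> n" for j
      using ip_Dm_eq_imp_aligned[OF _ that] by simp
    obtain u where u: "u \<in> V n" "normY n u \<le> 1" "0 < normX n u" "ip n u a = normX n a"
      "\<forall>j\<le>n. 0 \<le> Dstar n a j * Dstar n u j \<and> (Dstar n a j = 0 \<longrightarrow> Dstar n u j = 0)"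
      using exists_aligned_test_vector[OF aV False] .
    have "ip n u b = ip n (Dm n w) u" using w(1) by (simp only: ip_commute)
    also have "\<dots> = (\<Sum>j\<le>n. w j * Dstar n u j)" by (rule ip_Dm)
    also have "\<dots> = (\<Sum>j\<le>n. normY n b * \<bar>Dstar n u j\<bar>)"
    proof (rule sum.cong[OF refl])
      fix j assume "j \<in> {..n}"
      then have "j \<le> n" by simp
      with u(5) have "0 \<le> Dstar n a j * Dstar n u j" "Dstar n a j = 0 \<Longrightarrow> Dstar n u j = 0"
        by blast+
      then show "w j * Dstar n u j = normY n b * \<bar>Dstar n u j\<bar>"
        by (rule mult_abs_transfer[OF aligned[OF \<open>j \<le> n\<close>]])
    qed
    finally have "ip n u b = normY n b * normX n u"
      by (simp add: normX_def norm1W_def sum_distrib_left)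
    with aV bV c u(1-4) show ?thesis by (rule is_decomp_XY_of_test_vector)
  qed
qed

theorem mainTheorem17:
  fixes n :: nat
  shows "is_norm_on (V n) (normX n) \<and> is_norm_on (V n) (normY n)
    \<and> (\<forall>a\<in>V n. \<exists>b\<in>W n. Dm n b = a \<and> supnormW n b = normY n a)
    \<and> (\<forall>a\<in>V n. normY n a = Sup {ip n a x | x. x \<in> V n \<and> normX n x \<le> 1})
    \<and> (\<forall>c\<in>V n. tight (V n) (normX n) (normY n) (norm2 n) c)"
proof (intro conjI ballI)
  fix a assume "a \<in> V n"
  show "\<exists>b\<in>W n. Dm n b = a \<and> supnormW n b = normY n a"
    by (rule normY_attained[OF \<open>a \<in> V n\<close>]) blast
  show "normY n a = Sup {ip n a x | x. x \<in> V n \<and> normX n x \<le> 1}"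
    by (rule normY_eq_Sup[OF \<open>a \<in> V n\<close>])
qed (simp_all add: normX_is_norm normY_is_norm tight_def X2_decomp_imp_XY_decomp)

end
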